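(* Let $n\ge 1$. Let $H_1$ be the graph obtained from the complete bipartite graph $K_{n,n}$ with left vertices $l_1,\dots,l_n$ and right vertices $r_1,\dots,r_n$ by adding two new vertices $s$ (source) and $t$ (sink), joining each $l_j$ to $s$ by $n$ internally vertex-disjoint paths of length $n$ (with new internal vertices), and joining each $r_j$ to $t$ by $n$ internally vertex-disjoint paths of length $n$ (with new internal vertices). For $i\ge 2$, let $H_i$ be the graph obtained from $H_1$ by replacing every edge $(a,b)$ of $H_1$ by a fresh copy of $H_{i-1}$ whose source and sink are identified with $a$ and $b$; the source and sink of $H_i$ are $s$ and $t$. Then for every $i\ge 1$, $H_i$ has treewidth at most $n+1$.
   Context: Treewidth: a tree decomposition of $G=(V_G,E_G)$ is a tree $T$ with bags $X_i\subseteq V_G$ ($i\in V(T)$) such that the bags cover $V_G$, every edge has both endpoints in some bag, and for $i,j,k\in V(T)$ with $j$ on the $i$–$k$ path, $X_i\cap X_k\subseteq X_j$. Its width is $\max_i|X_i|-1$; the treewidth of $G$ is the minimum width over its tree decompositions. *)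

theory Defs
  imports Main
begin

text \<open>A graph is given by a vertex set V and a set E of edges, each edge being a
  2-element set of vertices.\<close>

definition is_tpath :: "'b set set \<Rightarrow> 'b list \<Rightarrow> bool" where
  "is_tpath TE xs \<longleftrightarrow> xs \<noteq> [] \<and> distinct xs \<and>
     (\<forall>m. Suc m < length xs \<longrightarrow> {xs ! m, xs ! Suc m} \<in> TE)"

definition is_tree :: "'b set \<Rightarrow> 'b set set \<Rightarrow> bool" where
  "is_tree N TE \<longleftrightarrow> finite N \<and> N \<noteq> {} \<and>
     TE \<subseteq> {{u, v} | u v. u \<in> N \<and> v \<in> N \<and> u \<noteq> v} \<and>
     (\<forall>u\<in>N. \<forall>v\<in>N. \<exists>xs. is_tpath TE xs \<and> hd xs = u \<and> last xs = v) \<and>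
     \<not> (\<exists>xs. is_tpath TE xs \<and> length xs \<ge> 3 \<and> {last xs, hd xs} \<in> TE)"

definition tree_decomposition ::
  "'a set \<Rightarrow> 'a set set \<Rightarrow> 'b set \<Rightarrow> 'b set set \<Rightarrow> ('b \<Rightarrow> 'a set) \<Rightarrow> bool" where
  "tree_decomposition V E N TE X \<longleftrightarrow> is_tree N TE \<and>
     (\<forall>i\<in>N. X i \<subseteq> V) \<and> (\<Union>i\<in>N. X i) = V \<and>
     (\<forall>e\<in>E. \<exists>i\<in>N. e \<subseteq> X i) \<and>
     (\<forall>xs. is_tpath TE xs \<longrightarrow> (\<forall>j\<in>set xs. X (hd xs) \<inter> X (last xs) \<subseteq> X j))"

definition treewidth :: "'a set \<Rightarrow> 'a set set \<Rightarrow> nat" where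
  "treewidth V E = (LEAST k. \<exists>(N :: nat set) TE X. tree_decomposition V E N TE X \<and>
      (\<forall>i\<in>N. card (X i) \<le> k + 1))"

text \<open>Vertices of the base graph H_1: source S, sink T, left vertices L j, right
  vertices R j (j < n), internal vertex PL j k m = m-th internal vertex of the k-th
  path from s to l_j, and PR j k m = m-th internal vertex of the k-th path from r_j
  to t (0 < m < n).\<close>

datatype v1 = S | T | L nat | R nat | PL nat nat nat | PR nat nat nat

definition nodeL :: "nat \<Rightarrow> nat \<Rightarrow> nat \<Rightarrow> nat \<Rightarrow> v1" where
  "nodeL n j k m = (if m = 0 then S else if m = n then L j else PL j k m)"

definition nodeR :: "nat \<Rightarrow> nat \<Rightarrow> nat \<Rightarrow> nat \<Rightarrow> v1" where
  "nodeR n j k m = (if m = 0 then R j else if m = n then T else PR j k m)"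

definition V1 :: "nat \<Rightarrow> v1 set" where
  "V1 n = {S, T} \<union> L ` {..<n} \<union> R ` {..<n} \<union>
     {PL j k m | j k m. j < n \<and> k < n \<and> 0 < m \<and> m < n} \<union>
     {PR j k m | j k m. j < n \<and> k < n \<and> 0 < m \<and> m < n}"

text \<open>Edges of H_1, each oriented (from the source side towards the sink side);
  the orientation tells how the source/sink of the substituted copies are glued.\<close>

definition D1 :: "nat \<Rightarrow> (v1 \<times> v1) set" where
  "D1 n = {(L j, R k) | j k. j < n \<and> k < n} \<union>
     {(nodeL n j k m, nodeL n j k (Suc m)) | j k m. j < n \<and> k < n \<and> m < n} \<union>
     {(nodeR n j k m, nodeR n j k (Suc m)) | j k m. j < n \<and> k < n \<and> m < n}"

text \<open>Vertices of H_i: a list of H_1-edges (the nested copies one lies in) and a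
  vertex of H_1.  emb a b embeds a copy into the edge (a,b), identifying the copy's
  source with a and its sink with b.\<close>

type_synonym hvert = "(v1 \<times> v1) list \<times> v1"

definition emb :: "v1 \<Rightarrow> v1 \<Rightarrow> hvert \<Rightarrow> hvert" where
  "emb a b x = (if x = ([], S) then ([], a) else if x = ([], T) then ([], b)
                else ((a, b) # fst x, snd x))"

text \<open>H n 0 is a single edge s--t (so that H n 1 is exactly H_1); H n (i+1) is H_1 with
  every edge (a,b) replaced by a fresh copy of H n i glued at a and b.\<close>

fun Hv :: "nat \<Rightarrow> nat \<Rightarrow> hvert set" where
  "Hv n 0 = {([], S), ([], T)}"
| "Hv n (Suc i) = (\<lambda>v. ([], v)) ` V1 n \<union> (\<Union>(a, b)\<in>D1 n. emb a b ` Hv n i)"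

fun He :: "nat \<Rightarrow> nat \<Rightarrow> hvert set set" where
  "He n 0 = {{([], S), ([], T)}}"
| "He n (Suc i) = (\<Union>(a, b)\<in>D1 n. (\<lambda>e. emb a b ` e) ` He n i)"

end

theory Submission
  imports Defs
begin

text \<open>
  H_1 together with the extra edge st has a tree decomposition with bags of at most n + 2 vertices
  in which s and t share a bag: a core bag {s, t, l_1, ..., l_n}; for every r_k a bag
  {t, r_k, l_1, ..., l_n} covering the edges of K_{n,n} at r_k; and along each subdivided path a
  chain of bags, each holding the two ends of the path (s and l_j, or r_j and t) together with two
  consecutive path vertices.  For H_{i+1}, take this decomposition of the outer copy of H_1 and, by
  induction, a decomposition of H_i + st for the copy substituted into each edge ab.  The copy meets
  the rest of the graph only in a and b, and both some bag of the outer decomposition (the one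
  covering the edge ab) and some bag of the copy (the one covering st) contain {a, b}; joining these
  two bags by a tree edge keeps the decomposition valid.  All constructions are instances of this
  gluing of two tree decompositions along one new tree edge.
\<close>

section \<open>Paths in trees\<close>

definition doubletons :: "'b set \<Rightarrow> 'b set set" where
  "doubletons N = {{u, v} | u v. u \<in> N \<and> v \<in> N \<and> u \<noteq> v}"

lemma doubletonsD: "{u, v} \<in> doubletons N \<Longrightarrow> u \<in> N \<and> v \<in> N \<and> u \<noteq> v"
  unfolding doubletons_def by (auto simp: doubleton_eq_iff)

lemma doubletons_mono: "M \<subseteq> N \<Longrightarrow> doubletons M \<subseteq> doubletons N"
  unfolding doubletons_def by blast

lemma is_tree_edges: "is_tree N TE \<Longrightarrow> TE \<subseteq> doubletons N"
  unfolding is_tree_def doubletons_def by blast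

lemma is_tpath_Nil [simp]: "\<not> is_tpath TE []"
  by (simp add: is_tpath_def)

lemma is_tpath_singleton [simp]: "is_tpath TE [x]"
  by (simp add: is_tpath_def)

lemma is_tpath_Cons_Cons:
  "is_tpath TE (x # y # ys) \<longleftrightarrow> {x, y} \<in> TE \<and> x \<notin> set (y # ys) \<and> is_tpath TE (y # ys)"
  unfolding is_tpath_def by (auto simp: less_Suc_eq_0_disj)

lemma is_tpath_append:
  assumes "xs \<noteq> []" "ys \<noteq> []"
  shows "is_tpath TE (xs @ ys) \<longleftrightarrow>
    is_tpath TE xs \<and> is_tpath TE ys \<and> {last xs, hd ys} \<in> TE \<and> set xs \<inter> set ys = {}"
  using assms
proof (induction xs)
  case (Cons x xs)
  then show ?case
    by (cases xs; cases ys) (auto simp: is_tpath_Cons_Cons)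
qed simp

lemma is_tpath_mono: "is_tpath TE xs \<Longrightarrow> TE \<subseteq> TE' \<Longrightarrow> is_tpath TE' xs"
  unfolding is_tpath_def by blast

lemma is_tpath_map:
  assumes "is_tpath TE xs" "inj_on f (set xs)" "\<And>u v. {u, v} \<in> TE \<Longrightarrow> {f u, f v} \<in> TE'"
  shows "is_tpath TE' (map f xs)"
  using assms unfolding is_tpath_def by (auto simp: distinct_map)

lemma is_tpath_hd_eq_last: "is_tpath TE xs \<Longrightarrow> hd xs = last xs \<Longrightarrow> xs = [hd xs]"
proof (cases xs rule: remdups_adj.cases)
  case (3 x y ys)
  then show "is_tpath TE xs \<Longrightarrow> hd xs = last xs \<Longrightarrow> xs = [hd xs]"
    using last_in_set[of "y # ys"] by (auto simp: is_tpath_Cons_Cons)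
qed auto

lemma is_tpath_set_subset:
  assumes "TE \<subseteq> doubletons N" "is_tpath TE xs" "hd xs \<in> N \<or> length xs \<ge> 2"
  shows "set xs \<subseteq> N"
  using assms(2,3)
proof (induction xs rule: remdups_adj.induct)
  case (3 x y ys)
  then have "{x, y} \<in> doubletons N" "is_tpath TE (y # ys)"
    using assms(1) by (auto simp: is_tpath_Cons_Cons)
  with "3.IH" show ?case by (auto dest: doubletonsD)
qed auto

lemma is_tree_path_subset:
  "is_tree N TE \<Longrightarrow> is_tpath TE xs \<Longrightarrow> hd xs \<in> N \<or> length xs \<ge> 2 \<Longrightarrow> set xs \<subseteq> N"
  using is_tpath_set_subset is_tree_edges by blast

lemma is_tree_singleton: "is_tree {x} {}"
  unfolding is_tree_def by (auto intro!: exI[of _ "[x]"])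

section \<open>Tree decompositions\<close>

lemma tree_decompositionI:
  assumes "is_tree N TE" "\<And>i. i \<in> N \<Longrightarrow> X i \<subseteq> V" "V \<subseteq> (\<Union>i\<in>N. X i)"
    "\<And>e. e \<in> E \<Longrightarrow> \<exists>i\<in>N. e \<subseteq> X i"
    "\<And>xs j. is_tpath TE xs \<Longrightarrow> set xs \<subseteq> N \<Longrightarrow> j \<in> set xs \<Longrightarrow> X (hd xs) \<inter> X (last xs) \<subseteq> X j"
  shows "tree_decomposition V E N TE X"
proof -
  have "X (hd xs) \<inter> X (last xs) \<subseteq> X j" if xs: "is_tpath TE xs" and j: "j \<in> set xs" for xs j
  proof (cases "length xs \<ge> 2")
    case True
    with assms(1,5) xs j show ?thesis using is_tree_path_subset by blast
  next
    case False
    with xs j have "xs = [j]" by (cases xs rule: remdups_adj.cases) auto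
    then show ?thesis by simp
  qed
  with assms show ?thesis unfolding tree_decomposition_def by blast
qed

lemma tree_decomposition_path:
  "tree_decomposition V E N TE X \<Longrightarrow> is_tpath TE xs \<Longrightarrow> j \<in> set xs \<Longrightarrow> X (hd xs) \<inter> X (last xs) \<subseteq> X j"
  unfolding tree_decomposition_def by blast

lemma tree_decomposition_bag_subset: "tree_decomposition V E N TE X \<Longrightarrow> i \<in> N \<Longrightarrow> X i \<subseteq> V"
  unfolding tree_decomposition_def by blast

lemma tree_decomposition_covers: "tree_decomposition V E N TE X \<Longrightarrow> (\<Union>i\<in>N. X i) = V"
  unfolding tree_decomposition_def by blast

lemma tree_decomposition_edge:
  "tree_decomposition V E N TE X \<Longrightarrow> e \<in> E \<Longrightarrow> \<exists>i\<in>N. e \<subseteq> X i"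
  unfolding tree_decomposition_def by blast

lemma tree_decomposition_singleton:
  "(\<And>e. e \<in> E \<Longrightarrow> e \<subseteq> X x) \<Longrightarrow> tree_decomposition (X x) E {x} {} X"
proof (rule tree_decompositionI[OF is_tree_singleton])
  fix xs j assume xs: "is_tpath {} xs" "set xs \<subseteq> {x}" and "j \<in> set xs"
  then have "hd xs = j" "last xs = j"
    using hd_in_set last_in_set is_tpath_Nil by (metis singletonD subsetD)+
  then show "X (hd xs) \<inter> X (last xs) \<subseteq> X j" by simp
qed auto

lemma tree_decomposition_mono_edges:
  "tree_decomposition V E N TE X \<Longrightarrow> E' \<subseteq> E \<Longrightarrow> tree_decomposition V E' N TE X"
  unfolding tree_decomposition_def by blast

lemma tree_decomposition_image_vertices:
  assumes f: "inj_on f V" and td: "tree_decomposition V E N TE X"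
  shows "tree_decomposition (f ` V) ((`) f ` E) N TE (\<lambda>i. f ` X i)"
proof (rule tree_decompositionI)
  fix xs j assume xs: "is_tpath TE xs" "set xs \<subseteq> N" and j: "j \<in> set xs"
  have "f ` X (hd xs) \<inter> f ` X (last xs) = f ` (X (hd xs) \<inter> X (last xs))"
  proof (rule inj_on_image_Int[OF f, symmetric])
    have "xs \<noteq> []" using xs(1) by auto
    then have "hd xs \<in> N" "last xs \<in> N" using xs(2) by auto
    then show "X (hd xs) \<subseteq> V" "X (last xs) \<subseteq> V" using tree_decomposition_bag_subset[OF td] by auto
  qed
  also have "\<dots> \<subseteq> f ` X j" using tree_decomposition_path[OF td xs(1) j] by blast
  finally show "f ` X (hd xs) \<inter> f ` X (last xs) \<subseteq> f ` X j" .
qed (use td in \<open>auto simp: tree_decomposition_def\<close>, fastforce)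

lemma doubletons_image: "inj_on g N \<Longrightarrow> (`) g ` doubletons N \<subseteq> doubletons (g ` N)"
  unfolding doubletons_def by (fastforce dest: inj_on_contraD)

lemma image_edge_preimage:
  assumes "TE \<subseteq> doubletons N" "inj_on g N" "{u, v} \<in> (`) g ` TE"
  shows "{inv_into N g u, inv_into N g v} \<in> TE"
proof -
  obtain e where "e \<in> TE" "{u, v} = g ` e" using assms(3) by blast
  with assms(1) obtain a b where ab: "{a, b} \<in> TE" "{u, v} = {g a, g b}" "a \<in> N" "b \<in> N"
    unfolding doubletons_def by blast
  with ab assms(2) show ?thesis by (auto simp: doubleton_eq_iff insert_commute)
qed

lemma is_tpath_image_preimage:
  assumes "TE \<subseteq> doubletons N" "inj_on g N" "is_tpath ((`) g ` TE) ys" "set ys \<subseteq> g ` N"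
  shows "\<exists>xs. is_tpath TE xs \<and> set xs \<subseteq> N \<and> ys = map g xs"
proof (intro exI conjI)
  show "is_tpath TE (map (inv_into N g) ys)"
    using assms by (intro is_tpath_map inj_on_inv_into image_edge_preimage) auto
  show "set (map (inv_into N g) ys) \<subseteq> N"
    using assms(4) by (auto intro: inv_into_into)
  show "ys = map g (map (inv_into N g) ys)"
    using assms(4) by (induction ys) (auto simp: f_inv_into_f)
qed

lemma is_tree_image:
  assumes g: "inj_on g N" and tree: "is_tree N TE"
  shows "is_tree (g ` N) ((`) g ` TE)"
proof -
  have edges: "TE \<subseteq> doubletons N" using is_tree_edges[OF tree] .
  have edges': "(`) g ` TE \<subseteq> doubletons (g ` N)"
    using doubletons_image[OF g] edges by blast
  have connected: "\<exists>ys. is_tpath ((`) g ` TE) ys \<and> hd ys = g a \<and> last ys = g b"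
    if "a \<in> N" "b \<in> N" for a b
  proof -
    obtain xs where xs: "is_tpath TE xs" "hd xs = a" "last xs = b"
      using tree \<open>a \<in> N\<close> \<open>b \<in> N\<close> unfolding is_tree_def by blast
    have "set xs \<subseteq> N" using is_tree_path_subset[OF tree xs(1)] xs(2) \<open>a \<in> N\<close> by blast
    moreover have "{g u, g v} \<in> (`) g ` TE" if "{u, v} \<in> TE" for u v
      using that by (metis image_empty image_insert imageI)
    ultimately have "is_tpath ((`) g ` TE) (map g xs)"
      using xs(1) g by (intro is_tpath_map) (auto intro: inj_on_subset)
    moreover have "xs \<noteq> []" using xs(1) by auto
    ultimately show ?thesis using xs by (intro exI[of _ "map g xs"]) (simp add: hd_map last_map)
  qed
  have acyclic: False
    if ys: "is_tpath ((`) g ` TE) ys" "3 \<le> length ys" "{last ys, hd ys} \<in> (`) g ` TE" for ys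
  proof -
    have "set ys \<subseteq> g ` N" using is_tpath_set_subset[OF edges' ys(1)] ys(2) by simp
    from is_tpath_image_preimage[OF edges g ys(1) this]
    obtain xs where xs: "is_tpath TE xs" "set xs \<subseteq> N" "ys = map g xs" by blast
    have "xs \<noteq> []" "length xs \<ge> 3" using xs ys(2) by auto
    with xs ys(3) have "{g (last xs), g (hd xs)} \<in> (`) g ` TE" by (simp add: hd_map last_map)
    then have "{inv_into N g (g (last xs)), inv_into N g (g (hd xs))} \<in> TE"
      using image_edge_preimage[OF edges g] by blast
    moreover have "last xs \<in> N" "hd xs \<in> N" using xs(2) \<open>xs \<noteq> []\<close> by auto
    ultimately have "{last xs, hd xs} \<in> TE" using g by simp
    with tree xs(1) \<open>length xs \<ge> 3\<close> show False unfolding is_tree_def by blast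
  qed
  show ?thesis
    unfolding is_tree_def
  proof (intro conjI ballI)
    show "finite (g ` N)" "g ` N \<noteq> {}" using tree by (auto simp: is_tree_def)
    show "(`) g ` TE \<subseteq> {{u, v} |u v. u \<in> g ` N \<and> v \<in> g ` N \<and> u \<noteq> v}"
      using edges' by (simp add: doubletons_def)
  qed (use connected acyclic in blast)+
qed

lemma tree_decomposition_image_nodes:
  assumes g: "inj_on g N" and td: "tree_decomposition V E N TE X"
    and Y: "\<And>i. i \<in> N \<Longrightarrow> Y (g i) = X i"
  shows "tree_decomposition V E (g ` N) ((`) g ` TE) Y"
proof (rule tree_decompositionI)
  have tree: "is_tree N TE" using td by (simp add: tree_decomposition_def)
  show "is_tree (g ` N) ((`) g ` TE)" using is_tree_image[OF g tree] .
  fix ys j assume ys: "is_tpath ((`) g ` TE) ys" "set ys \<subseteq> g ` N" and j: "j \<in> set ys"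
  from is_tpath_image_preimage[OF is_tree_edges[OF tree] g ys]
  obtain xs where xs: "is_tpath TE xs" "set xs \<subseteq> N" "ys = map g xs" by blast
  with j obtain i where "j = g i" "i \<in> set xs" "X (hd xs) \<inter> X (last xs) \<subseteq> X i"
    using tree_decomposition_path[OF td] by auto
  moreover have "xs \<noteq> []" using xs(1) by auto
  ultimately show "Y (hd ys) \<inter> Y (last ys) \<subseteq> Y j"
    using xs Y by (simp add: hd_map last_map subset_iff)
qed (use td Y in \<open>auto simp: tree_decomposition_def\<close>)

section \<open>Gluing tree decompositions\<close>

locale tree_bridge =
  fixes N1 :: "'b set" and T1 :: "'b set set" and p :: 'b
    and N2 :: "'b set" and T2 :: "'b set set" and q :: 'b
  assumes tree1: "is_tree N1 T1" and tree2: "is_tree N2 T2"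
    and disjoint: "N1 \<inter> N2 = {}" and p: "p \<in> N1" and q: "q \<in> N2"
begin

definition bridged :: "'b set set" where
  "bridged = T1 \<union> T2 \<union> {{p, q}}"

sublocale swapped: tree_bridge N2 T2 q N1 T1 p
  using tree1 tree2 disjoint p q by unfold_locales auto

lemma swapped_bridged: "swapped.bridged = bridged"
  unfolding bridged_def swapped.bridged_def by (auto simp: insert_commute)

lemma bridged_edge_from_N1:
  assumes "{a, b} \<in> bridged" "a \<in> N1"
  shows "({a, b} \<in> T1 \<and> b \<in> N1) \<or> (a = p \<and> b = q)"
  using assms disjoint q doubletonsD[of a b] is_tree_edges[OF tree1] is_tree_edges[OF tree2]
  unfolding bridged_def by (auto simp: doubleton_eq_iff)

lemma bridged_path_avoiding_q:
  "is_tpath bridged xs \<Longrightarrow> hd xs \<in> N1 \<Longrightarrow> q \<notin> set xs \<Longrightarrow> is_tpath T1 xs \<and> set xs \<subseteq> N1"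
proof (induction xs rule: remdups_adj.induct)
  case (3 x y ys)
  then have "{x, y} \<in> T1" "y \<in> N1" using bridged_edge_from_N1[of x y]
    by (auto simp: is_tpath_Cons_Cons)
  with "3" show ?case by (auto simp: is_tpath_Cons_Cons)
qed auto

end

(* Reopening the context brings the lemmas above into scope for the swapped interpretation. *)
context tree_bridge
begin

lemma bridged_path_from_N1:
  assumes xs: "is_tpath bridged xs" and hd: "hd xs \<in> N1"
  shows "(is_tpath T1 xs \<and> set xs \<subseteq> N1) \<or>
    (\<exists>ys zs. xs = ys @ zs \<and> is_tpath T1 ys \<and> set ys \<subseteq> N1 \<and> last ys = p \<and>
      is_tpath T2 zs \<and> set zs \<subseteq> N2 \<and> hd zs = q)"
proof (cases "q \<in> set xs")
  case False
  with bridged_path_avoiding_q xs hd show ?thesis by blast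
next
  case True
  then obtain ys zs where split: "xs = ys @ q # zs" "q \<notin> set ys" by (metis split_list_first)
  have "ys \<noteq> []" using split hd q disjoint by auto
  then have ys: "is_tpath bridged ys" "is_tpath bridged (q # zs)" "{last ys, q} \<in> bridged"
    "set ys \<inter> set (q # zs) = {}"
    using xs split is_tpath_append[of ys "q # zs"] by auto
  have "hd ys \<in> N1" using hd split \<open>ys \<noteq> []\<close> by simp
  then have ys1: "is_tpath T1 ys" "set ys \<subseteq> N1"
    using bridged_path_avoiding_q ys(1) split(2) by auto
  moreover have "last ys \<in> N1" using ys1(2) last_in_set[OF \<open>ys \<noteq> []\<close>] by blast
  ultimately have "last ys = p"
    using bridged_edge_from_N1[OF ys(3)] q disjoint by blast
  then have "p \<notin> set (q # zs)" using ys(4) \<open>ys \<noteq> []\<close> last_in_set by blast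
  then have "is_tpath T2 (q # zs) \<and> set (q # zs) \<subseteq> N2"
    using swapped.bridged_path_avoiding_q[of "q # zs"] ys(2) q unfolding swapped_bridged by simp
  with ys1 \<open>last ys = p\<close> split(1) show ?thesis by (intro disjI2 exI[of _ ys] exI[of _ "q # zs"]) simp
qed

lemma bridged_path_across:
  assumes "u \<in> N1" "v \<in> N2"
  shows "\<exists>xs. is_tpath bridged xs \<and> hd xs = u \<and> last xs = v"
proof -
  obtain ys where ys: "is_tpath T1 ys" "hd ys = u" "last ys = p"
    using tree1 assms(1) p unfolding is_tree_def by blast
  obtain zs where zs: "is_tpath T2 zs" "hd zs = q" "last zs = v"
    using tree2 assms(2) q unfolding is_tree_def by blast
  have "set ys \<subseteq> N1" "set zs \<subseteq> N2"
    using is_tree_path_subset[OF tree1 ys(1)] is_tree_path_subset[OF tree2 zs(1)] ys zs assms p q by auto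
  moreover have "ys \<noteq> []" "zs \<noteq> []" using ys(1) zs(1) by auto
  moreover have "is_tpath bridged ys" "is_tpath bridged zs" "{p, q} \<in> bridged"
    using ys(1) zs(1) by (auto simp: bridged_def intro: is_tpath_mono)
  ultimately show ?thesis
    using ys zs disjoint is_tpath_append[of ys zs] by (intro exI[of _ "ys @ zs"]) auto
qed

lemma bridged_no_cycle_from_N1:
  assumes xs: "is_tpath bridged xs" "hd xs \<in> N1" "3 \<le> length xs"
    and closing: "{last xs, hd xs} \<in> bridged"
  shows False
  using bridged_path_from_N1[OF xs(1,2)]
proof (elim disjE exE conjE)
  assume "is_tpath T1 xs" "set xs \<subseteq> N1"
  moreover have "last xs \<in> N1" using \<open>set xs \<subseteq> N1\<close> xs(3) by (cases xs) auto
  ultimately show False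
    using bridged_edge_from_N1[OF closing] tree1 xs(2,3) q disjoint unfolding is_tree_def by blast
next
  fix ys zs assume split: "xs = ys @ zs" "is_tpath T1 ys" "last ys = p" "is_tpath T2 zs"
    "set zs \<subseteq> N2" "hd zs = q"
  have "zs \<noteq> []" "ys \<noteq> []" using split by auto
  then have "last xs \<in> N2" "hd ys = hd xs" "last zs = last xs" using split by auto
  then have "last xs = q \<and> hd xs = p"
    using swapped.bridged_edge_from_N1[of "last xs" "hd xs"] closing xs(2) disjoint
    by (auto simp: swapped_bridged)
  then have "ys = [p]" "zs = [q]"
    using is_tpath_hd_eq_last split \<open>hd ys = hd xs\<close> \<open>last zs = last xs\<close> by metis+
  with split xs(3) show False by simp
qed

lemma bridged_bag_path_from_N1:
  assumes td1: "tree_decomposition U1 E1 N1 T1 Y" and td2: "tree_decomposition U2 E2 N2 T2 Y"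
    and sep: "U1 \<inter> U2 \<subseteq> Y p" "U1 \<inter> U2 \<subseteq> Y q"
    and xs: "is_tpath bridged xs" "hd xs \<in> N1" and j: "j \<in> set xs"
  shows "Y (hd xs) \<inter> Y (last xs) \<subseteq> Y j"
  using bridged_path_from_N1[OF xs]
proof (elim disjE exE conjE)
  assume "is_tpath T1 xs"
  then show ?thesis using tree_decomposition_path[OF td1] j by blast
next
  fix ys zs assume split: "xs = ys @ zs" "is_tpath T1 ys" "last ys = p" "is_tpath T2 zs"
    "set zs \<subseteq> N2" "hd zs = q"
  have "zs \<noteq> []" "ys \<noteq> []" using split by auto
  then have ends: "hd xs = hd ys" "last xs = last zs" "last zs \<in> N2" using split by auto
  have "Y (hd xs) \<inter> Y (last xs) \<subseteq> U1 \<inter> U2"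
    using tree_decomposition_bag_subset[OF td1 xs(2)] tree_decomposition_bag_subset[OF td2 ends(3)]
      ends(2) by auto
  moreover have "Y (hd ys) \<inter> Y p \<subseteq> Y j" if "j \<in> set ys"
    using tree_decomposition_path[OF td1 split(2) that] split(3) by simp
  moreover have "Y q \<inter> Y (last zs) \<subseteq> Y j" if "j \<in> set zs"
    using tree_decomposition_path[OF td2 split(4) that] split(6) by simp
  ultimately show ?thesis using sep j split(1) ends(1,2) by (auto; blast)
qed

end

context tree_bridge
begin

lemma is_tree_bridged: "is_tree (N1 \<union> N2) bridged"
proof -
  have "{p, q} \<in> doubletons (N1 \<union> N2)" using p q disjoint unfolding doubletons_def by blast
  then have edges: "bridged \<subseteq> doubletons (N1 \<union> N2)"
    using is_tree_edges[OF tree1] is_tree_edges[OF tree2] doubletons_mono[of N1 "N1 \<union> N2"]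
      doubletons_mono[of N2 "N1 \<union> N2"]
    unfolding bridged_def by blast
  have "is_tpath bridged xs" if "is_tpath T1 xs \<or> is_tpath T2 xs" for xs
    using that by (auto simp: bridged_def elim: is_tpath_mono)
  then have connected: "\<forall>u\<in>N1 \<union> N2. \<forall>v\<in>N1 \<union> N2. \<exists>xs. is_tpath bridged xs \<and> hd xs = u \<and> last xs = v"
    using tree1 tree2 bridged_path_across swapped.bridged_path_across
    unfolding is_tree_def swapped_bridged by blast
  have acyclic: "\<not> (\<exists>xs. is_tpath bridged xs \<and> 3 \<le> length xs \<and> {last xs, hd xs} \<in> bridged)"
  proof
    assume "\<exists>xs. is_tpath bridged xs \<and> 3 \<le> length xs \<and> {last xs, hd xs} \<in> bridged"
    then obtain xs where xs: "is_tpath bridged xs" "3 \<le> length xs" "{last xs, hd xs} \<in> bridged"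
      by blast
    have "hd xs \<in> N1 \<union> N2" using is_tpath_set_subset[OF edges xs(1)] xs by (cases xs) auto
    then show False
      using bridged_no_cycle_from_N1 swapped.bridged_no_cycle_from_N1 xs
      by (auto simp: swapped_bridged)
  qed
  have "finite (N1 \<union> N2)" "N1 \<union> N2 \<noteq> {}" using tree1 tree2 by (auto simp: is_tree_def)
  with edges connected acyclic show ?thesis
    unfolding is_tree_def doubletons_def by blast
qed

lemma tree_decomposition_bridged:
  assumes td1: "tree_decomposition U1 E1 N1 T1 Y" and td2: "tree_decomposition U2 E2 N2 T2 Y"
    and sep: "U1 \<inter> U2 \<subseteq> Y p" "U1 \<inter> U2 \<subseteq> Y q"
  shows "tree_decomposition (U1 \<union> U2) (E1 \<union> E2) (N1 \<union> N2) bridged Y"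
proof (rule tree_decompositionI[OF is_tree_bridged])
  show "Y i \<subseteq> U1 \<union> U2" if "i \<in> N1 \<union> N2" for i
    using that tree_decomposition_bag_subset[OF td1] tree_decomposition_bag_subset[OF td2] by blast
  show "U1 \<union> U2 \<subseteq> (\<Union>i\<in>N1 \<union> N2. Y i)"
    using tree_decomposition_covers[OF td1] tree_decomposition_covers[OF td2] by blast
  show "\<exists>i\<in>N1 \<union> N2. e \<subseteq> Y i" if "e \<in> E1 \<union> E2" for e
    using that tree_decomposition_edge[OF td1] tree_decomposition_edge[OF td2] by blast
next
  fix xs j assume xs: "is_tpath bridged xs" "set xs \<subseteq> N1 \<union> N2" and j: "j \<in> set xs"
  then have "hd xs \<in> N1 \<or> hd xs \<in> N2" by (cases xs) auto
  then show "Y (hd xs) \<inter> Y (last xs) \<subseteq> Y j"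
    using bridged_bag_path_from_N1[OF td1 td2 sep xs(1) _ j]
      swapped.bridged_bag_path_from_N1[OF td2 td1 _ _ _ _ j] sep xs(1)
    by (auto simp: swapped_bridged Int_commute)
qed

end

lemma tree_decomposition_glue:
  assumes td1: "tree_decomposition U1 E1 N1 T1 Y" and td2: "tree_decomposition U2 E2 N2 T2 Y"
    and "N1 \<inter> N2 = {}" "p \<in> N1" "q \<in> N2" "U1 \<inter> U2 \<subseteq> Y p" "U1 \<inter> U2 \<subseteq> Y q"
  shows "tree_decomposition (U1 \<union> U2) (E1 \<union> E2) (N1 \<union> N2) (T1 \<union> T2 \<union> {{p, q}}) Y"
proof -
  interpret tree_bridge N1 T1 p N2 T2 q
    using assms by unfold_locales (auto simp: tree_decomposition_def)
  show ?thesis using tree_decomposition_bridged[OF td1 td2] assms by (simp add: bridged_def)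
qed

lemma tree_decomposition_attach_family:
  assumes "finite I" and base: "\<exists>TE. tree_decomposition V E N TE Y"
    and pieces: "\<And>x. x \<in> I \<Longrightarrow> \<exists>TE. tree_decomposition (VV x) (EE x) (NN x) TE Y"
    and fresh_nodes: "\<And>x. x \<in> I \<Longrightarrow> NN x \<inter> N = {}"
    and disjoint_nodes: "\<And>x y. x \<in> I \<Longrightarrow> y \<in> I \<Longrightarrow> x \<noteq> y \<Longrightarrow> NN x \<inter> NN y = {}"
    and attach: "\<And>x. x \<in> I \<Longrightarrow> \<exists>p\<in>N. \<exists>q\<in>NN x. V \<inter> VV x \<subseteq> Y p \<and> V \<inter> VV x \<subseteq> Y q"
    and overlap: "\<And>x y. x \<in> I \<Longrightarrow> y \<in> I \<Longrightarrow> x \<noteq> y \<Longrightarrow> VV x \<inter> VV y \<subseteq> V"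
    and "V' = V \<union> (\<Union>x\<in>I. VV x)" "E' \<subseteq> E \<union> (\<Union>x\<in>I. EE x)" "N' = N \<union> (\<Union>x\<in>I. NN x)"
  shows "\<exists>TE. tree_decomposition V' E' N' TE Y"
proof -
  have "\<exists>TE. tree_decomposition (V \<union> (\<Union>x\<in>I. VV x)) (E \<union> (\<Union>x\<in>I. EE x))
    (N \<union> (\<Union>x\<in>I. NN x)) TE Y"
    using assms(1) pieces fresh_nodes disjoint_nodes attach overlap
  proof (induction I rule: finite_induct)
    case empty
    then show ?case using base by auto
  next
    case (insert x F)
    have "\<exists>T0. tree_decomposition (V \<union> (\<Union>x\<in>F. VV x)) (E \<union> (\<Union>x\<in>F. EE x))
        (N \<union> (\<Union>x\<in>F. NN x)) T0 Y"
      using insert.prems by (intro insert.IH) auto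
    then obtain T0 where T0: "tree_decomposition (V \<union> (\<Union>x\<in>F. VV x)) (E \<union> (\<Union>x\<in>F. EE x))
        (N \<union> (\<Union>x\<in>F. NN x)) T0 Y"
      by blast
    obtain Tx where Tx: "tree_decomposition (VV x) (EE x) (NN x) Tx Y" using insert.prems(1) by blast
    obtain p q where pq: "p \<in> N" "q \<in> NN x" "V \<inter> VV x \<subseteq> Y p" "V \<inter> VV x \<subseteq> Y q"
      using insert.prems(4) by blast
    have "(N \<union> (\<Union>x\<in>F. NN x)) \<inter> NN x = {}"
      using insert.prems(2,3) insert.hyps(2) by blast
    moreover have "(V \<union> (\<Union>x\<in>F. VV x)) \<inter> VV x \<subseteq> V \<inter> VV x"
      using insert.prems(5) insert.hyps(2) by blast
    ultimately have "tree_decomposition ((V \<union> (\<Union>x\<in>F. VV x)) \<union> VV x) ((E \<union> (\<Union>x\<in>F. EE x)) \<union> EE x)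
        ((N \<union> (\<Union>x\<in>F. NN x)) \<union> NN x) (T0 \<union> Tx \<union> {{p, q}}) Y"
      using pq by (intro tree_decomposition_glue[OF T0 Tx]) auto
    then show ?case by (auto simp: Un_ac)
  qed
  with assms(8-10) show ?thesis using tree_decomposition_mono_edges by blast
qed

lemma tree_decomposition_path_graph:
  fixes f :: "nat \<Rightarrow> 'a" and g :: "nat \<Rightarrow> 'b"
  assumes g: "inj g"
    and revisits: "\<And>m m'. m' \<le> m \<Longrightarrow> f (Suc m) = f m' \<Longrightarrow> f (Suc m) \<in> K"
    and bags: "\<And>m. Y (g m) = K \<union> {f m, f (Suc m)}"
    and "M \<ge> 1"
  shows "\<exists>TE. tree_decomposition (K \<union> f ` {..M}) {{f m, f (Suc m)} | m. m < M} (g ` {..<M}) TE Y"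
  using \<open>M \<ge> 1\<close>
proof (induction M rule: nat_induct_at_least)
  case base
  have "f ` {..1} = {f 0, f 1}" by (auto simp: le_Suc_eq)
  then have "tree_decomposition (Y (g 0)) {{f m, f (Suc m)} | m. m < 1} {g 0} {} Y"
    by (intro tree_decomposition_singleton) (auto simp: bags)
  moreover have "Y (g 0) = K \<union> f ` {..1}" "g ` {..<1} = {g 0}"
    using \<open>f ` {..1} = {f 0, f 1}\<close> by (auto simp: bags)
  ultimately show ?case by auto
next
  case (Suc M)
  then obtain T0 where T0: "tree_decomposition (K \<union> f ` {..M}) {{f m, f (Suc m)} | m. m < M}
      (g ` {..<M}) T0 Y" by blast
  have T1: "tree_decomposition (Y (g M)) {{f M, f (Suc M)}} {g M} {} Y"
    by (rule tree_decomposition_singleton) (simp add: bags)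
  obtain M' where M': "M = Suc M'" using Suc.hyps by (cases M) auto
  have "(K \<union> f ` {..M}) \<inter> Y (g M) \<subseteq> K \<union> {f M}"
    using revisits[of _ M] by (auto simp: bags)
  then have "tree_decomposition ((K \<union> f ` {..M}) \<union> Y (g M)) ({{f m, f (Suc m)} | m. m < M} \<union> {{f M, f (Suc M)}})
      (g ` {..<M} \<union> {g M}) (T0 \<union> {} \<union> {{g M', g M}}) Y"
    using g M' by (intro tree_decomposition_glue[OF T0 T1]) (auto simp: bags inj_eq)
  moreover have "(K \<union> f ` {..M}) \<union> Y (g M) = K \<union> f ` {..Suc M}"
    by (auto simp: bags le_Suc_eq)
  moreover have "{{f m, f (Suc m)} | m. m < M} \<union> {{f M, f (Suc M)}} = {{f m, f (Suc m)} | m. m < Suc M}"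
    by (auto simp: less_Suc_eq)
  moreover have "g ` {..<M} \<union> {g M} = g ` {..<Suc M}" by (auto simp: lessThan_Suc)
  ultimately show ?case by auto
qed

section \<open>A tree decomposition of H_1\<close>

datatype skel_node = Core | Right nat | LeftPath nat nat nat | RightPath nat nat nat

fun skel_bag :: "nat \<Rightarrow> skel_node \<Rightarrow> v1 set" where
  "skel_bag n Core = {S, T} \<union> L ` {..<n}"
| "skel_bag n (Right k) = {T, R k} \<union> L ` {..<n}"
| "skel_bag n (LeftPath j k m) = {S, L j} \<union> {nodeL n j k m, nodeL n j k (Suc m)}"
| "skel_bag n (RightPath j k m) = {R j, T} \<union> {nodeR n j k m, nodeR n j k (Suc m)}"

lemma nodeL_image: "n \<ge> 1 \<Longrightarrow> nodeL n j k ` {..n} = {S, L j} \<union> {PL j k m | m. 0 < m \<and> m < n}"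
  by (auto simp: nodeL_def image_iff intro: exI[of _ 0] exI[of _ n])

lemma nodeR_image: "n \<ge> 1 \<Longrightarrow> nodeR n j k ` {..n} = {R j, T} \<union> {PR j k m | m. 0 < m \<and> m < n}"
  by (auto simp: nodeR_def image_iff intro: exI[of _ 0] exI[of _ n])

lemma core_decomposition:
  "\<exists>TE. tree_decomposition ({S, T} \<union> L ` {..<n} \<union> R ` {..<n})
     (insert {S, T} {{L j, R k} | j k. j < n \<and> k < n}) (insert Core (Right ` {..<n})) TE (skel_bag n)"
proof (rule tree_decomposition_attach_family[where I = "{..<n}" and VV = "\<lambda>k. skel_bag n (Right k)"
      and EE = "\<lambda>k. {{L j, R k} | j. j < n}" and NN = "\<lambda>k. {Right k}"])
  show "\<exists>TE. tree_decomposition (skel_bag n Core) {{S, T}} {Core} TE (skel_bag n)"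
    by (rule exI, rule tree_decomposition_singleton) auto
  show "\<exists>TE. tree_decomposition (skel_bag n (Right k)) {{L j, R k} | j. j < n} {Right k} TE (skel_bag n)"
    for k by (rule exI, rule tree_decomposition_singleton) auto
qed auto

lemma left_path_decomposition:
  "n \<ge> 1 \<Longrightarrow> \<exists>TE. tree_decomposition ({S, L j} \<union> nodeL n j k ` {..n})
     {{nodeL n j k m, nodeL n j k (Suc m)} | m. m < n} (LeftPath j k ` {..<n}) TE (skel_bag n)"
  by (rule tree_decomposition_path_graph) (auto simp: inj_def nodeL_def split: if_splits)

lemma right_path_decomposition:
  "n \<ge> 1 \<Longrightarrow> \<exists>TE. tree_decomposition ({R j, T} \<union> nodeR n j k ` {..n})
     {{nodeR n j k m, nodeR n j k (Suc m)} | m. m < n} (RightPath j k ` {..<n}) TE (skel_bag n)"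
  by (rule tree_decomposition_path_graph) (auto simp: inj_def nodeR_def split: if_splits)

lemma core_left_decomposition:
  assumes "n \<ge> 1"
  shows "\<exists>TE. tree_decomposition
    ({S, T} \<union> L ` {..<n} \<union> R ` {..<n} \<union> {PL j k m | j k m. j < n \<and> k < n \<and> 0 < m \<and> m < n})
    (insert {S, T} {{L j, R k} | j k. j < n \<and> k < n} \<union>
      {{nodeL n j k m, nodeL n j k (Suc m)} | j k m. j < n \<and> k < n \<and> m < n})
    (insert Core (Right ` {..<n}) \<union> {LeftPath j k m | j k m. j < n \<and> k < n \<and> m < n})
    TE (skel_bag n)"
proof (rule tree_decomposition_attach_family[OF _ core_decomposition, where I = "{..<n} \<times> {..<n}"
      and VV = "\<lambda>(j, k). {S, L j} \<union> nodeL n j k ` {..n}"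
      and EE = "\<lambda>(j, k). {{nodeL n j k m, nodeL n j k (Suc m)} | m. m < n}"
      and NN = "\<lambda>(j, k). LeftPath j k ` {..<n}"])
  fix x assume "x \<in> {..<n} \<times> {..<n}"
  then obtain j k where jk: "x = (j, k)" "j < n" "k < n" by blast
  then show "\<exists>TE. tree_decomposition ((\<lambda>(j, k). {S, L j} \<union> nodeL n j k ` {..n}) x)
      ((\<lambda>(j, k). {{nodeL n j k m, nodeL n j k (Suc m)} | m. m < n}) x)
      ((\<lambda>(j, k). LeftPath j k ` {..<n}) x) TE (skel_bag n)"
    using left_path_decomposition[OF assms] by simp
  have "({S, T} \<union> L ` {..<n} \<union> R ` {..<n}) \<inter> ({S, L j} \<union> nodeL n j k ` {..n}) \<subseteq> {S, L j}"
    unfolding nodeL_image[OF assms] by blast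
  with jk assms show "\<exists>p\<in>insert Core (Right ` {..<n}). \<exists>q\<in>(\<lambda>(j, k). LeftPath j k ` {..<n}) x.
      ({S, T} \<union> L ` {..<n} \<union> R ` {..<n}) \<inter> (\<lambda>(j, k). {S, L j} \<union> nodeL n j k ` {..n}) x \<subseteq> skel_bag n p \<and>
      ({S, T} \<union> L ` {..<n} \<union> R ` {..<n}) \<inter> (\<lambda>(j, k). {S, L j} \<union> nodeL n j k ` {..n}) x \<subseteq> skel_bag n q"
    by (intro bexI[of _ Core] bexI[of _ "LeftPath j k 0"]) auto
next
  show "{S, T} \<union> L ` {..<n} \<union> R ` {..<n} \<union> {PL j k m | j k m. j < n \<and> k < n \<and> 0 < m \<and> m < n} =
      {S, T} \<union> L ` {..<n} \<union> R ` {..<n} \<union> (\<Union>x\<in>{..<n} \<times> {..<n}. (\<lambda>(j, k). {S, L j} \<union> nodeL n j k ` {..n}) x)"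
    unfolding nodeL_image[OF assms] by fast
qed (auto simp: nodeL_image[OF assms])

lemma D1_edges: "{{a, b} | a b. (a, b) \<in> D1 n} = {{L j, R k} | j k. j < n \<and> k < n} \<union>
    {{nodeL n j k m, nodeL n j k (Suc m)} | j k m. j < n \<and> k < n \<and> m < n} \<union>
    {{nodeR n j k m, nodeR n j k (Suc m)} | j k m. j < n \<and> k < n \<and> m < n}"
  unfolding D1_def by blast

definition skel_nodes :: "nat \<Rightarrow> skel_node set" where
  "skel_nodes n = insert Core (Right ` {..<n}) \<union> {LeftPath j k m | j k m. j < n \<and> k < n \<and> m < n}
     \<union> {RightPath j k m | j k m. j < n \<and> k < n \<and> m < n}"

lemma skeleton_decomposition:
  assumes "n \<ge> 1"
  shows "\<exists>TE. tree_decomposition (V1 n) (insert {S, T} {{a, b} | a b. (a, b) \<in> D1 n}) (skel_nodes n)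
    TE (skel_bag n)"
proof (rule tree_decomposition_attach_family[OF _ core_left_decomposition[OF assms],
      where I = "{..<n} \<times> {..<n}" and VV = "\<lambda>(j, k). {R j, T} \<union> nodeR n j k ` {..n}"
      and EE = "\<lambda>(j, k). {{nodeR n j k m, nodeR n j k (Suc m)} | m. m < n}"
      and NN = "\<lambda>(j, k). RightPath j k ` {..<n}"])
  fix x assume "x \<in> {..<n} \<times> {..<n}"
  then obtain j k where jk: "x = (j, k)" "j < n" "k < n" by blast
  then show "\<exists>TE. tree_decomposition ((\<lambda>(j, k). {R j, T} \<union> nodeR n j k ` {..n}) x)
      ((\<lambda>(j, k). {{nodeR n j k m, nodeR n j k (Suc m)} | m. m < n}) x)
      ((\<lambda>(j, k). RightPath j k ` {..<n}) x) TE (skel_bag n)"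
    using right_path_decomposition[OF assms] by simp
  show "\<exists>p\<in>insert Core (Right ` {..<n}) \<union> {LeftPath j k m | j k m. j < n \<and> k < n \<and> m < n}.
      \<exists>q\<in>(\<lambda>(j, k). RightPath j k ` {..<n}) x.
      ({S, T} \<union> L ` {..<n} \<union> R ` {..<n} \<union> {PL j k m | j k m. j < n \<and> k < n \<and> 0 < m \<and> m < n}) \<inter>
        (\<lambda>(j, k). {R j, T} \<union> nodeR n j k ` {..n}) x \<subseteq> skel_bag n p \<and>
      ({S, T} \<union> L ` {..<n} \<union> R ` {..<n} \<union> {PL j k m | j k m. j < n \<and> k < n \<and> 0 < m \<and> m < n}) \<inter>
        (\<lambda>(j, k). {R j, T} \<union> nodeR n j k ` {..n}) x \<subseteq> skel_bag n q"
    using jk assms unfolding nodeR_image[OF assms]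
    by (intro bexI[of _ "Right j"] bexI[of _ "RightPath j k 0"]) auto
next
  show "V1 n = {S, T} \<union> L ` {..<n} \<union> R ` {..<n} \<union> {PL j k m | j k m. j < n \<and> k < n \<and> 0 < m \<and> m < n}
      \<union> (\<Union>x\<in>{..<n} \<times> {..<n}. (\<lambda>(j, k). {R j, T} \<union> nodeR n j k ` {..n}) x)"
    unfolding nodeR_image[OF assms] V1_def by fast
next
  show "insert {S, T} {{a, b} | a b. (a, b) \<in> D1 n} \<subseteq>
      insert {S, T} {{L j, R k} | j k. j < n \<and> k < n} \<union>
      {{nodeL n j k m, nodeL n j k (Suc m)} | j k m. j < n \<and> k < n \<and> m < n} \<union>
      (\<Union>x\<in>{..<n} \<times> {..<n}. (\<lambda>(j, k). {{nodeR n j k m, nodeR n j k (Suc m)} | m. m < n}) x)"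
    unfolding D1_edges by auto
qed (auto simp: nodeR_image[OF assms] skel_nodes_def)

lemma card_doubleton_le: "card {a, b} \<le> 2"
  by (simp add: card_insert_if)

lemma card_skel_bag:
  assumes "n \<ge> 1" "x \<in> skel_nodes n"
  shows "card (skel_bag n x) \<le> n + 2"
proof -
  have hub: "card ({a, b} \<union> L ` {..<n}) \<le> n + 2" for a b
    using card_Un_le[of "{a, b}" "L ` {..<n}"] card_image_le[of "{..<n}" L] card_doubleton_le[of a b]
    by simp
  have path: "card ({a, b} \<union> {c, d}) \<le> n + 2" if "n = 1 \<Longrightarrow> {c, d} \<subseteq> {a, b}" for a b c d :: v1
  proof (cases "n = 1")
    case True
    with that have "{a, b} \<union> {c, d} = {a, b}" by blast
    with True card_doubleton_le[of a b] show ?thesis by simp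
  next
    case False
    with assms(1) card_Un_le[of "{a, b}" "{c, d}"] card_doubleton_le[of a b] card_doubleton_le[of c d]
    show ?thesis by linarith
  qed
  from assms(2) consider "x = Core" | k where "x = Right k"
    | j k m where "x = LeftPath j k m" "m < n" | j k m where "x = RightPath j k m" "m < n"
    unfolding skel_nodes_def by blast
  then show ?thesis
  proof cases
    case (3 j k m)
    then show ?thesis unfolding 3(1) skel_bag.simps by (intro path) (auto simp: nodeL_def)
  next
    case (4 j k m)
    then show ?thesis unfolding 4(1) skel_bag.simps by (intro path) (auto simp: nodeR_def)
  qed (use hub in auto)
qed

section \<open>Tree decompositions of H_i\<close>

lemma emb_inj: "a \<noteq> b \<Longrightarrow> inj (emb a b)"
  unfolding inj_def emb_def by (auto simp: prod_eq_iff)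

lemma emb_Nil: "fst (emb a b z) = [] \<Longrightarrow> emb a b z \<in> {([], a), ([], b)}"
  unfolding emb_def by (auto split: if_splits)

lemma emb_Cons: "fst (emb a b z) \<noteq> [] \<Longrightarrow> hd (fst (emb a b z)) = (a, b)"
  unfolding emb_def by (auto split: if_splits)

lemma root_Int_emb_image: "Pair [] ` A \<inter> emb a b ` B \<subseteq> {([], a), ([], b)}"
proof
  fix x assume x: "x \<in> Pair [] ` A \<inter> emb a b ` B"
  then obtain z where "x = emb a b z" by blast
  moreover have "fst x = []" using x by (metis IntD1 fst_conv imageE)
  ultimately show "x \<in> {([], a), ([], b)}" using emb_Nil by simp
qed

lemma emb_image_Int_emb_image:
  assumes "(a, b) \<noteq> (c, d)"
  shows "emb a b ` A \<inter> emb c d ` B \<subseteq> {([], a), ([], b)}"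
proof
  fix x assume "x \<in> emb a b ` A \<inter> emb c d ` B"
  then obtain z z' where x: "x = emb a b z" "x = emb c d z'" by blast
  with emb_Cons[of a b z] emb_Cons[of c d z'] assms have "fst (emb a b z) = []" by metis
  then show "x \<in> {([], a), ([], b)}" using emb_Nil x by simp
qed

lemma D1_neq: "(a, b) \<in> D1 n \<Longrightarrow> a \<noteq> b"
  unfolding D1_def by (auto simp: nodeL_def nodeR_def split: if_splits)

lemma nodeL_in_V1: "j < n \<Longrightarrow> k < n \<Longrightarrow> m \<le> n \<Longrightarrow> nodeL n j k m \<in> V1 n"
  by (auto simp: nodeL_def V1_def)

lemma nodeR_in_V1: "j < n \<Longrightarrow> k < n \<Longrightarrow> m \<le> n \<Longrightarrow> nodeR n j k m \<in> V1 n"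
  by (auto simp: nodeR_def V1_def)

lemma D1_subset_V1: "(a, b) \<in> D1 n \<Longrightarrow> a \<in> V1 n \<and> b \<in> V1 n"
proof -
  have "L j \<in> V1 n" "R j \<in> V1 n" if "j < n" for j using that by (simp_all add: V1_def)
  then show "(a, b) \<in> D1 n \<Longrightarrow> a \<in> V1 n \<and> b \<in> V1 n"
    unfolding D1_def by (auto intro!: nodeL_in_V1 nodeR_in_V1)
qed

lemma finite_V1: "finite (V1 n)"
proof -
  have "V1 n \<subseteq> {S, T} \<union> L ` {..<n} \<union> R ` {..<n} \<union> (\<lambda>(j, k, m). PL j k m) ` ({..<n} \<times> {..<n} \<times> {..<n})
      \<union> (\<lambda>(j, k, m). PR j k m) ` ({..<n} \<times> {..<n} \<times> {..<n})"
    unfolding V1_def by force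
  then show ?thesis by (rule finite_subset) simp
qed

lemma finite_D1: "finite (D1 n)"
proof (rule finite_subset)
  show "D1 n \<subseteq> V1 n \<times> V1 n" using D1_subset_V1 by auto
qed (simp add: finite_V1)

lemma finite_Hv: "finite (Hv n i)"
  by (induction i) (auto simp: finite_V1 finite_D1)

(* A node (w, s) stands for the skeleton node s in the nested copy of H_1 reached through the
   edge list w, mirroring the vertex encoding of Hv. *)
type_synonym level_node = "(v1 \<times> v1) list \<times> skel_node"

fun level_bag :: "nat \<Rightarrow> (level_node \<Rightarrow> hvert set) \<Rightarrow> level_node \<Rightarrow> hvert set" where
  "level_bag n X ([], s) = Pair [] ` skel_bag n s"
| "level_bag n X (e # w, s) = emb (fst e) (snd e) ` X (w, s)"

abbreviation st_edge :: "hvert set" where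
  "st_edge \<equiv> {([], S), ([], T)}"

lemma skeleton_level_decomposition:
  assumes "n \<ge> 1"
  shows "\<exists>TE. tree_decomposition (Pair [] ` V1 n) ((`) (Pair []) ` insert {S, T} {{a, b} | a b. (a, b) \<in> D1 n})
    (Pair [] ` skel_nodes n) TE (level_bag n X)"
proof -
  obtain TE where "tree_decomposition (V1 n) (insert {S, T} {{a, b} | a b. (a, b) \<in> D1 n}) (skel_nodes n)
      TE (skel_bag n)"
    using skeleton_decomposition[OF assms] by blast
  then have "tree_decomposition (Pair [] ` V1 n) ((`) (Pair []) ` insert {S, T} {{a, b} | a b. (a, b) \<in> D1 n})
      (skel_nodes n) TE (\<lambda>s. Pair [] ` skel_bag n s)"
    by (rule tree_decomposition_image_vertices[rotated]) (simp add: inj_on_def)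
  from tree_decomposition_image_nodes[OF _ this, of "Pair []" "level_bag n X"] show ?thesis
    by (auto simp: inj_on_def)
qed

lemma copy_level_decomposition:
  assumes "a \<noteq> b" and td: "tree_decomposition (Hv n i) (insert st_edge (He n i)) N TE X"
  shows "\<exists>TE. tree_decomposition (emb a b ` Hv n i) ((`) (emb a b) ` insert st_edge (He n i))
    (apfst (Cons (a, b)) ` N) TE (level_bag n X)"
proof -
  have "tree_decomposition (emb a b ` Hv n i) ((`) (emb a b) ` insert st_edge (He n i)) N TE
      (\<lambda>z. emb a b ` X z)"
    using emb_inj[OF assms(1)] by (intro tree_decomposition_image_vertices[OF _ td]) (rule inj_on_subset, auto)
  moreover have "inj_on (apfst (Cons (a, b))) N"
    by (rule inj_on_subset[of _ UNIV]) (simp_all add: inj_def)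
  moreover have "level_bag n X (apfst (Cons (a, b)) z) = emb a b ` X z" for z
    by (cases z) simp
  ultimately show ?thesis by (blast intro: tree_decomposition_image_nodes)
qed

lemma skeleton_covers_D1:
  assumes "n \<ge> 1" "(a, b) \<in> D1 n"
  shows "\<exists>s\<in>skel_nodes n. {a, b} \<subseteq> skel_bag n s"
  using skeleton_decomposition[OF assms(1)] assms(2) by (blast dest: tree_decomposition_edge)

lemma level_step:
  assumes n: "n \<ge> 1" and td: "tree_decomposition (Hv n i) (insert st_edge (He n i)) N TE X"
  shows "\<exists>TE. tree_decomposition (Hv n (Suc i)) (insert st_edge (He n (Suc i)))
    (Pair [] ` skel_nodes n \<union> (\<Union>e\<in>D1 n. apfst (Cons e) ` N)) TE (level_bag n X)"
proof (rule tree_decomposition_attach_family[OF finite_D1 skeleton_level_decomposition[OF n],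
      where VV = "\<lambda>(a, b). emb a b ` Hv n i" and EE = "\<lambda>(a, b). (`) (emb a b) ` insert st_edge (He n i)"
      and NN = "\<lambda>e. apfst (Cons e) ` N"])
  fix e assume e: "e \<in> D1 n"
  obtain a b where ab: "e = (a, b)" by (cases e)
  show "\<exists>TE. tree_decomposition ((\<lambda>(a, b). emb a b ` Hv n i) e)
      ((\<lambda>(a, b). (`) (emb a b) ` insert st_edge (He n i)) e) (apfst (Cons e) ` N) TE (level_bag n X)"
    using copy_level_decomposition[OF D1_neq td] e ab by simp
  obtain s where s: "s \<in> skel_nodes n" "{a, b} \<subseteq> skel_bag n s"
    using skeleton_covers_D1[OF n] e ab by blast
  obtain r where r: "r \<in> N" "st_edge \<subseteq> X r" using tree_decomposition_edge[OF td] by blast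
  have sep: "Pair [] ` V1 n \<inter> (\<lambda>(a, b). emb a b ` Hv n i) e \<subseteq> {([], a), ([], b)}"
    using root_Int_emb_image ab by simp
  have "{([], a), ([], b)} \<subseteq> level_bag n X ([], s)" using s(2) by auto
  moreover have "{([], a), ([], b)} \<subseteq> level_bag n X (apfst (Cons e) r)"
  proof -
    have "emb a b ` st_edge \<subseteq> emb a b ` X r" using r(2) by (rule image_mono)
    moreover have "{([], a), ([], b)} = emb a b ` st_edge" by (simp add: emb_def insert_commute)
    moreover have "level_bag n X (apfst (Cons e) r) = emb a b ` X r" using ab by (cases r) simp
    ultimately show ?thesis by (simp only:)
  qed
  ultimately show "\<exists>p\<in>Pair [] ` skel_nodes n. \<exists>q\<in>apfst (Cons e) ` N.
      Pair [] ` V1 n \<inter> (\<lambda>(a, b). emb a b ` Hv n i) e \<subseteq> level_bag n X p \<and>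
      Pair [] ` V1 n \<inter> (\<lambda>(a, b). emb a b ` Hv n i) e \<subseteq> level_bag n X q"
    using sep s(1) r(1) by (intro bexI[of _ "([], s)"] bexI[of _ "apfst (Cons e) r"]) auto
next
  fix e e' assume "e \<in> D1 n" "e' \<in> D1 n" "e \<noteq> e'"
  moreover obtain a b c d where "e = (a, b)" "e' = (c, d)" by (cases e, cases e')
  ultimately show "(\<lambda>(a, b). emb a b ` Hv n i) e \<inter> (\<lambda>(a, b). emb a b ` Hv n i) e' \<subseteq> Pair [] ` V1 n"
    using emb_image_Int_emb_image[of a b c d "Hv n i" "Hv n i"] D1_subset_V1[of a b n] by auto
next
  show "insert st_edge (He n (Suc i)) \<subseteq> (`) (Pair []) ` insert {S, T} {{a, b} | a b. (a, b) \<in> D1 n}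
      \<union> (\<Union>e\<in>D1 n. (\<lambda>(a, b). (`) (emb a b) ` insert st_edge (He n i)) e)"
  proof -
    have "st_edge = Pair [] ` {S, T}" by simp
    moreover have "He n (Suc i) \<subseteq> (\<Union>e\<in>D1 n. (\<lambda>(a, b). (`) (emb a b) ` insert st_edge (He n i)) e)"
      by auto
    ultimately show ?thesis by blast
  qed
qed auto

lemma card_level_bag:
  assumes "n \<ge> 1" and td: "tree_decomposition (Hv n i) E N TE X"
    and X: "\<And>z. z \<in> N \<Longrightarrow> card (X z) \<le> n + 2"
    and x: "x \<in> Pair [] ` skel_nodes n \<union> (\<Union>e\<in>D1 n. apfst (Cons e) ` N)"
  shows "card (level_bag n X x) \<le> n + 2"
  using x
proof (elim UnE imageE UN_E)
  fix s assume "s \<in> skel_nodes n" "x = ([], s)"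
  moreover have "card (level_bag n X ([], s)) = card (skel_bag n s)"
    by (simp add: card_image inj_on_def)
  ultimately show ?thesis using card_skel_bag[OF assms(1)] by simp
next
  fix e z assume z: "z \<in> N" "x = apfst (Cons e) z"
  have "finite (X z)"
    using finite_subset[OF tree_decomposition_bag_subset[OF td z(1)] finite_Hv] .
  then have "card (level_bag n X x) \<le> card (X z)"
    using z(2) card_image_le by (cases z) simp
  then show ?thesis using X[OF z(1)] by simp
qed

lemma level_decomposition:
  assumes "n \<ge> 1"
  shows "\<exists>(N :: level_node set) TE X. tree_decomposition (Hv n i) (insert st_edge (He n i)) N TE X \<and>
    (\<forall>x\<in>N. card (X x) \<le> n + 2)"
proof (induction i)
  case 0
  have "tree_decomposition ((\<lambda>_. Hv n 0) ([], Core)) (insert st_edge (He n 0)) {([], Core)} {} (\<lambda>_. Hv n 0)"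
    by (rule tree_decomposition_singleton) simp
  then show ?case by (intro exI[of _ "{([], Core)}"] exI) (auto simp: card_insert_if)
next
  case (Suc i)
  then obtain N :: "level_node set" and TE X
    where td: "tree_decomposition (Hv n i) (insert st_edge (He n i)) N TE X"
    and X: "\<forall>x\<in>N. card (X x) \<le> n + 2" by blast
  with level_step[OF assms td] card_level_bag[OF assms td] show ?case by blast
qed

lemma treewidth_le:
  assumes td: "tree_decomposition V E N TE X" and bags: "\<And>i. i \<in> N \<Longrightarrow> card (X i) \<le> k + 1"
  shows "treewidth V E \<le> k"
proof -
  have "finite N" using td by (simp add: tree_decomposition_def is_tree_def)
  then obtain f :: "_ \<Rightarrow> nat" where f: "inj_on f N" using finite_imp_inj_to_nat_seg by blast
  have "tree_decomposition V E (f ` N) ((`) f ` TE) (\<lambda>j. X (inv_into N f j))"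
    using f by (intro tree_decomposition_image_nodes[OF f td]) simp
  moreover have "\<forall>j\<in>f ` N. card (X (inv_into N f j)) \<le> k + 1" using f bags by auto
  ultimately show ?thesis unfolding treewidth_def by (blast intro: Least_le)
qed

theorem lemma2:
  fixes n i :: nat
  assumes "n \<ge> 1" and "i \<ge> 1"
  shows "treewidth (Hv n i) (He n i) \<le> n + 1"
proof -
  obtain N :: "level_node set" and TE X
    where td: "tree_decomposition (Hv n i) (insert st_edge (He n i)) N TE X"
      and bags: "\<forall>x\<in>N. card (X x) \<le> n + 2"
    using level_decomposition[OF assms(1)] by blast
  show ?thesis
    using bags by (intro treewidth_le[OF tree_decomposition_mono_edges[OF td]]) auto
qed

end
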